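(* Let $G$ be a graph, let $X$ be a partition parameter defined by property $x$, and let $\mathcal Y=\{Y_i\}_{i=1}^m$ be a partition of $V(G)$ having property $x$ such that $|\mathcal Y|=X(G)$. Then the following are equivalent: (1) $\mathcal{R}^{\mathrm{TE}}_X(G)\cong K_{|Y_1|}\,\square\,\cdots\,\square\,K_{|Y_m|}$; (2) $\mathcal{R}^{\mathrm{TS}}_X(G)\cong G[Y_1]\,\square\,\cdots\,\square\,G[Y_m]$; (3) $\mathcal Y$ is the unique partition of $V(G)$ having property $x$ with $|\mathcal Y|=X(G)$.
   Context: All graphs are finite and simple; $\square$ is the Cartesian product and $G[Y]$ the induced subgraph. A graph parameter $X$ is a partition parameter defined by property $x$ if for every graph $G$, $X(G)$ equals either (for every graph) the maximum, or (for every graph) the minimum, of $|\mathcal Y|$ over partitions $\mathcal Y$ of $V(G)$ having property $x$ in $G$. A set $B\subseteq V(G)$ is a transversal of a partition $\mathcal Y$ if $|Y\cap B|=1$ for every $Y\in\mathcal Y$. For a partition parameter $X$, the reconfiguration graphs are those of the associated transversal vertex parameter: $\mathcal{R}^{\mathrm{TE}}_X(G)$ has as vertices all transversals $B$ of partitions of $V(G)$ having property $x$ with $|B|=X(G)$, and $B_1B_2$ is an edge iff there exist $v_1\in B_1\setminus B_2$, $v_2\in B_2\setminus B_1$ with $B_1\setminus\{v_1\}=B_2\setminus\{v_2\}$; $\mathcal{R}^{\mathrm{TS}}_X(G)$ has the same vertex set, with the additional adjacency requirement $v_1v_2\in E(G)$. *)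

theory Defs
  imports Main "HOL-Library.FuncSet" "HOL-Library.Disjoint_Sets"
begin

type_synonym 'a graph = "'a set \<times> 'a set set"

definition verts :: "'a graph \<Rightarrow> 'a set" where "verts G = fst G"
definition edges :: "'a graph \<Rightarrow> 'a set set" where "edges G = snd G"

definition graph :: "'a graph \<Rightarrow> bool" where
  "graph G \<longleftrightarrow> finite (verts G) \<and>
     (\<forall>e\<in>edges G. \<exists>u v. e = {u, v} \<and> u \<noteq> v \<and> u \<in> verts G \<and> v \<in> verts G)"

definition adj :: "'a graph \<Rightarrow> 'a \<Rightarrow> 'a \<Rightarrow> bool" where
  "adj G u v \<longleftrightarrow> {u, v} \<in> edges G"

definition induced :: "'a graph \<Rightarrow> 'a set \<Rightarrow> 'a graph" where
  "induced G Y = (Y, {e \<in> edges G. e \<subseteq> Y})"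

definition complete :: "nat \<Rightarrow> nat graph" where
  "complete n = ({0..<n}, {{i, j} | i j. i < n \<and> j < n \<and> i \<noteq> j})"

definition cart_prod :: "'i set \<Rightarrow> ('i \<Rightarrow> 'a graph) \<Rightarrow> ('i \<Rightarrow> 'a) graph" where
  "cart_prod I Gs =
    (PiE I (\<lambda>i. verts (Gs i)),
     {{f, g} | f g. f \<in> PiE I (\<lambda>i. verts (Gs i)) \<and> g \<in> PiE I (\<lambda>i. verts (Gs i)) \<and>
        (\<exists>i\<in>I. adj (Gs i) (f i) (g i) \<and> (\<forall>j\<in>I. j \<noteq> i \<longrightarrow> f j = g j))})"

definition iso :: "'a graph \<Rightarrow> 'b graph \<Rightarrow> bool" where
  "iso G H \<longleftrightarrow> (\<exists>h. bij_betw h (verts G) (verts H) \<and>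
     (\<forall>u\<in>verts G. \<forall>v\<in>verts G. adj G u v \<longleftrightarrow> adj H (h u) (h v)))"

definition part_sizes :: "('a graph \<Rightarrow> 'a set set \<Rightarrow> bool) \<Rightarrow> 'a graph \<Rightarrow> nat set" where
  "part_sizes x G = {card P | P. partition_on (verts G) P \<and> x G P}"

definition partition_param :: "('a graph \<Rightarrow> nat) \<Rightarrow> ('a graph \<Rightarrow> 'a set set \<Rightarrow> bool) \<Rightarrow> bool" where
  "partition_param X x \<longleftrightarrow>
     (\<forall>G. graph G \<longrightarrow> X G \<in> part_sizes x G \<and> (\<forall>n\<in>part_sizes x G. n \<le> X G)) \<or>
     (\<forall>G. graph G \<longrightarrow> X G \<in> part_sizes x G \<and> (\<forall>n\<in>part_sizes x G. X G \<le> n))"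

definition transversal :: "'a graph \<Rightarrow> 'a set set \<Rightarrow> 'a set \<Rightarrow> bool" where
  "transversal G P B \<longleftrightarrow> B \<subseteq> verts G \<and> (\<forall>Y\<in>P. card (Y \<inter> B) = 1)"

definition reconf_verts ::
  "('a graph \<Rightarrow> nat) \<Rightarrow> ('a graph \<Rightarrow> 'a set set \<Rightarrow> bool) \<Rightarrow> 'a graph \<Rightarrow> 'a set set" where
  "reconf_verts X x G = {B. card B = X G \<and>
     (\<exists>P. partition_on (verts G) P \<and> x G P \<and> transversal G P B)}"

definition R_TE ::
  "('a graph \<Rightarrow> nat) \<Rightarrow> ('a graph \<Rightarrow> 'a set set \<Rightarrow> bool) \<Rightarrow> 'a graph \<Rightarrow> 'a set graph" where
  "R_TE X x G = (reconf_verts X x G,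
     {{B1, B2} | B1 B2. B1 \<in> reconf_verts X x G \<and> B2 \<in> reconf_verts X x G \<and>
        (\<exists>v1\<in>B1 - B2. \<exists>v2\<in>B2 - B1. B1 - {v1} = B2 - {v2})})"

definition R_TS ::
  "('a graph \<Rightarrow> nat) \<Rightarrow> ('a graph \<Rightarrow> 'a set set \<Rightarrow> bool) \<Rightarrow> 'a graph \<Rightarrow> 'a set graph" where
  "R_TS X x G = (reconf_verts X x G,
     {{B1, B2} | B1 B2. B1 \<in> reconf_verts X x G \<and> B2 \<in> reconf_verts X x G \<and>
        (\<exists>v1\<in>B1 - B2. \<exists>v2\<in>B2 - B1. B1 - {v1} = B2 - {v2} \<and> adj G v1 v2)})"

end

theory Submission
  imports Defs
begin

(* Every transversal of Ys has card Ys = X(G) elements, so the set T of transversals of Ys is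
   contained in the common vertex set V of both reconfiguration graphs, and choosing one vertex per
   block identifies T with the product of the blocks. Two transversals of Ys are related by a single
   exchange v1 -> v2 exactly when they differ in one block, where they pick v1 and v2; so if V = T, both
   reconfiguration graphs are the stated Cartesian products. Conversely an isomorphism forces
   card V = card T, hence V = T. Finally V = T holds iff Ys is the only optimal partition: if P is
   optimal, each of its transversals lies in V = T, and exchanging a vertex inside a block of P yields
   another transversal of P, which forces every block of P into a single block of Ys; a refinement of
   Ys with as many blocks as Ys is Ys itself. *)

section \<open>Partitions and transversals\<close>

lemma partition_on_block_eq:
  assumes "partition_on A P" "p \<in> P" "q \<in> P" "v \<in> p" "v \<in> q"
  shows "p = q"
  using assms unfolding partition_on_def disjoint_def by blast

lemma partition_on_obtain_block:
  assumes "partition_on A P" "v \<in> A"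
  obtains p where "p \<in> P" "v \<in> p"
  using assms partition_onD1 by blast

lemma refines_card_eq_imp_eq:
  assumes ref: "refines A P Q" and "finite P" and card_eq: "card P = card Q"
  shows "P = Q"
proof -
  have PA: "partition_on A P" and QA: "partition_on A Q"
    using ref unfolding refines_def by auto
  define f where "f p = (SOME q. q \<in> Q \<and> p \<subseteq> q)" for p
  have f: "f p \<in> Q \<and> p \<subseteq> f p" if "p \<in> P" for p
    unfolding f_def by (rule someI_ex) (use ref that in \<open>auto simp: refines_def\<close>)
  have f_eq: "f p = q" if "p \<in> P" "q \<in> Q" "v \<in> p" "v \<in> q" for p q v
    using f[OF that(1)] partition_on_block_eq[OF QA _ that(2) _ that(4)] that(3) by blast
  have block_of: "\<exists>p\<in>P. v \<in> p" if "v \<in> q" "q \<in> Q" for v q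
    using that partition_onD1[OF PA] partition_onD1[OF QA] by blast
  have "f ` P = Q"
  proof (intro subset_antisym subsetI)
    fix q assume q: "q \<in> Q"
    then obtain v where "v \<in> q" using partition_onD3[OF QA] by (metis all_not_in_conv)
    then show "q \<in> f ` P" using block_of f_eq q by blast
  qed (use f in blast)
  then have inj: "inj_on f P"
    using eq_card_imp_inj_on[OF \<open>finite P\<close>] card_eq by metis
  have "Q \<subseteq> P"
  proof
    fix q assume q: "q \<in> Q"
    then obtain p where p: "p \<in> P" "f p = q" using \<open>f ` P = Q\<close> by blast
    have "q \<subseteq> p"
    proof
      fix v assume "v \<in> q"
      then obtain p' where p': "p' \<in> P" "v \<in> p'" using block_of q by blast
      then have "f p' = f p" using f_eq q p(2) \<open>v \<in> q\<close> by blast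
      then show "v \<in> p" using inj_onD[OF inj _ p'(1) p(1)] p' by simp
    qed
    then show "q \<in> P" using f[OF p(1)] p by auto
  qed
  then show ?thesis using card_subset_eq[OF \<open>finite P\<close>] card_eq by metis
qed

definition block_rep :: "'a set \<Rightarrow> 'a set \<Rightarrow> 'a" where
  "block_rep Y B = the_elem (Y \<inter> B)"

lemma transversal_Int_block:
  assumes "transversal G P B" "Y \<in> P"
  shows "Y \<inter> B = {block_rep Y B}"
  using assms unfolding transversal_def block_rep_def by (metis card_1_singletonE the_elem_eq)

lemma block_rep_in_block: "transversal G P B \<Longrightarrow> Y \<in> P \<Longrightarrow> block_rep Y B \<in> Y"
  and block_rep_in_transversal: "transversal G P B \<Longrightarrow> Y \<in> P \<Longrightarrow> block_rep Y B \<in> B"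
  using transversal_Int_block by (metis Int_iff singletonI)+

lemma block_rep_eqI: "transversal G P B \<Longrightarrow> Y \<in> P \<Longrightarrow> v \<in> Y \<Longrightarrow> v \<in> B \<Longrightarrow> block_rep Y B = v"
  using transversal_Int_block by (metis IntI singletonD)

definition exchange :: "('a \<Rightarrow> 'a \<Rightarrow> bool) \<Rightarrow> 'a set \<Rightarrow> 'a set \<Rightarrow> bool" where
  "exchange r B1 B2 \<longleftrightarrow> (\<exists>v1\<in>B1 - B2. \<exists>v2\<in>B2 - B1. B1 - {v1} = B2 - {v2} \<and> r v1 v2)"

context
  fixes G :: "'a graph" and P :: "'a set set"
  assumes P: "partition_on (verts G) P"
begin

lemma transversal_obtain_block:
  assumes "transversal G P B" "v \<in> B"
  obtains Y where "Y \<in> P" "v \<in> Y"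
proof -
  have "v \<in> verts G" using assms unfolding transversal_def by blast
  then show ?thesis using partition_on_obtain_block[OF P] that by blast
qed

lemma transversal_eq_image_block_rep:
  assumes B: "transversal G P B"
  shows "B = (\<lambda>Y. block_rep Y B) ` P"
proof (intro subset_antisym subsetI)
  fix v assume "v \<in> B"
  moreover obtain Y where "Y \<in> P" "v \<in> Y"
    using transversal_obtain_block[OF B \<open>v \<in> B\<close>] .
  ultimately show "v \<in> (\<lambda>Y. block_rep Y B) ` P"
    using block_rep_eqI[OF B] by force
qed (use B block_rep_in_transversal in blast)

lemma inj_on_block_rep:
  assumes B: "transversal G P B"
  shows "inj_on (\<lambda>Y. block_rep Y B) P"
proof (rule inj_onI)
  fix Y Y' assume "Y \<in> P" "Y' \<in> P" "block_rep Y B = block_rep Y' B"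
  then show "Y = Y'"
    using block_rep_in_block[OF B] partition_on_block_eq[OF P] by metis
qed

lemma card_transversal:
  assumes B: "transversal G P B"
  shows "card B = card P"
proof -
  have "card B = card ((\<lambda>Y. block_rep Y B) ` P)"
    using transversal_eq_image_block_rep[OF B] by simp
  also have "\<dots> = card P"
    by (rule card_image[OF inj_on_block_rep[OF B]])
  finally show ?thesis .
qed

lemma transversal_eqI:
  assumes "transversal G P B1" "transversal G P B2"
    and "\<And>Y. Y \<in> P \<Longrightarrow> block_rep Y B1 = block_rep Y B2"
  shows "B1 = B2"
proof -
  have "(\<lambda>Y. block_rep Y B1) ` P = (\<lambda>Y. block_rep Y B2) ` P"
    by (rule image_cong) (use assms(3) in auto)
  then show ?thesis
    using transversal_eq_image_block_rep[OF assms(1)] transversal_eq_image_block_rep[OF assms(2)]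
    by simp
qed

lemma transversal_image:
  assumes f: "\<And>Y. Y \<in> P \<Longrightarrow> f Y \<in> Y"
  shows "transversal G P (f ` P)"
    and "Y \<in> P \<Longrightarrow> block_rep Y (f ` P) = f Y"
proof -
  have "Y \<inter> f ` P = {f Y}" if "Y \<in> P" for Y
    using that f partition_on_block_eq[OF P] by blast
  moreover have "f ` P \<subseteq> verts G"
    using f partition_onD1[OF P] by blast
  ultimately show tr: "transversal G P (f ` P)"
    unfolding transversal_def by simp
  show "Y \<in> P \<Longrightarrow> block_rep Y (f ` P) = f Y"
    using block_rep_eqI[OF tr] f by blast
qed

lemma ex_transversal_through:
  assumes Y: "Y \<in> P" "a \<in> Y"
  shows "\<exists>B. transversal G P B \<and> a \<in> B"
proof -
  define f where "f Y' = (if Y' = Y then a else SOME v. v \<in> Y')" for Y'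
  have "f Y' \<in> Y'" if "Y' \<in> P" for Y'
    using that Y partition_onD3[OF P] some_in_eq unfolding f_def by (cases "Y' = Y") auto
  moreover have "a \<in> f ` P"
    using Y unfolding f_def by force
  ultimately show ?thesis
    using transversal_image(1) by blast
qed

lemma transversal_exchange_in_block:
  assumes B: "transversal G P B" and Y: "Y \<in> P" "a \<in> Y" "a \<in> B" "b \<in> Y"
  shows "transversal G P (insert b (B - {a}))"
  unfolding transversal_def
proof (intro conjI ballI)
  show "insert b (B - {a}) \<subseteq> verts G"
    using B Y partition_onD1[OF P] unfolding transversal_def by blast
  fix Y' assume Y': "Y' \<in> P"
  show "card (Y' \<inter> insert b (B - {a})) = 1"
  proof (cases "Y' = Y")
    case True
    have "Y \<inter> B = {a}"
      using transversal_Int_block[OF B Y(1)] block_rep_eqI[OF B Y(1-3)] by simp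
    then have "Y \<inter> insert b (B - {a}) = {b}"
      using Y by blast
    then show ?thesis using True by simp
  next
    case False
    then have "Y' \<inter> insert b (B - {a}) = Y' \<inter> B"
      using Y' Y partition_on_block_eq[OF P] by blast
    then show ?thesis using B Y' unfolding transversal_def by simp
  qed
qed

lemma bij_betw_transversals_PiE:
  assumes E: "\<And>Y. Y \<in> P \<Longrightarrow> bij_betw (E Y) Y (V Y)"
  shows "bij_betw (\<lambda>B. restrict (\<lambda>Y. E Y (block_rep Y B)) P) {B. transversal G P B} (PiE P V)"
proof (rule bij_betw_imageI)
  show "inj_on (\<lambda>B. restrict (\<lambda>Y. E Y (block_rep Y B)) P) {B. transversal G P B}"
  proof (rule inj_onI)
    fix B1 B2
    assume B: "B1 \<in> {B. transversal G P B}" "B2 \<in> {B. transversal G P B}"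
      and eq: "restrict (\<lambda>Y. E Y (block_rep Y B1)) P = restrict (\<lambda>Y. E Y (block_rep Y B2)) P"
    have "block_rep Y B1 = block_rep Y B2" if Y: "Y \<in> P" for Y
    proof (rule inj_onD)
      show "inj_on (E Y) Y" using E[OF Y] by (simp add: bij_betw_def)
      show "E Y (block_rep Y B1) = E Y (block_rep Y B2)" using fun_cong[OF eq, of Y] Y by simp
      show "block_rep Y B1 \<in> Y" "block_rep Y B2 \<in> Y"
        using B Y by (simp_all add: block_rep_in_block)
    qed
    then show "B1 = B2"
      using B transversal_eqI by simp
  qed
  show "(\<lambda>B. restrict (\<lambda>Y. E Y (block_rep Y B)) P) ` {B. transversal G P B} = PiE P V"
  proof (intro subset_antisym subsetI)
    fix h assume h: "h \<in> PiE P V"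
    define g where "g Y = inv_into Y (E Y) (h Y)" for Y
    have g: "g Y \<in> Y" "E Y (g Y) = h Y" if "Y \<in> P" for Y
    proof -
      have "h Y \<in> E Y ` Y"
        using E[OF that] PiE_mem[OF h that] by (simp add: bij_betw_def)
      then show "g Y \<in> Y" "E Y (g Y) = h Y"
        unfolding g_def by (simp_all add: inv_into_into f_inv_into_f)
    qed
    have "h = restrict (\<lambda>Y. E Y (block_rep Y (g ` P))) P"
      using h g transversal_image(2)[of g] by (auto simp: PiE_iff extensional_def)
    then show "h \<in> (\<lambda>B. restrict (\<lambda>Y. E Y (block_rep Y B)) P) ` {B. transversal G P B}"
      using transversal_image(1)[of g] g by blast
  next
    fix h assume "h \<in> (\<lambda>B. restrict (\<lambda>Y. E Y (block_rep Y B)) P) ` {B. transversal G P B}"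
    then obtain B where B: "transversal G P B" and h: "h = restrict (\<lambda>Y. E Y (block_rep Y B)) P"
      by blast
    have "E Y (block_rep Y B) \<in> V Y" if "Y \<in> P" for Y
      using bij_betwE[OF E[OF that]] block_rep_in_block[OF B that] by blast
    then show "h \<in> PiE P V" unfolding h by simp
  qed
qed

lemma transversal_Diff_block_rep:
  assumes B: "transversal G P B" and Y: "Y \<in> P"
  shows "B - {block_rep Y B} = (\<lambda>Y'. block_rep Y' B) ` (P - {Y})"
proof -
  have "(\<lambda>Y'. block_rep Y' B) ` (P - {Y}) = (\<lambda>Y'. block_rep Y' B) ` P - {block_rep Y B}"
    using inj_on_image_set_diff[OF inj_on_block_rep[OF B], of P "{Y}"] Y by simp
  then show ?thesis using transversal_eq_image_block_rep[OF B] by simp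
qed

lemma exchange_transversals_iff:
  assumes B1: "transversal G P B1" and B2: "transversal G P B2"
  shows "exchange r B1 B2 \<longleftrightarrow>
    (\<exists>Y\<in>P. r (block_rep Y B1) (block_rep Y B2) \<and> block_rep Y B1 \<noteq> block_rep Y B2 \<and>
       (\<forall>Y'\<in>P - {Y}. block_rep Y' B1 = block_rep Y' B2))"
proof
  assume "exchange r B1 B2"
  then obtain v1 v2 where v1: "v1 \<in> B1" "v1 \<notin> B2" and v2: "v2 \<in> B2" "v2 \<notin> B1"
    and eq: "B1 - {v1} = B2 - {v2}" and r: "r v1 v2"
    unfolding exchange_def by blast
  obtain Y where Y: "Y \<in> P" "v1 \<in> Y" using transversal_obtain_block[OF B1 v1(1)] .
  have rep1: "block_rep Y B1 = v1" using block_rep_eqI[OF B1 Y v1(1)] .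
  have rep2: "block_rep Y B2 = v2"
  proof (rule ccontr)
    assume "block_rep Y B2 \<noteq> v2"
    then have "block_rep Y B2 \<in> B1 - {v1}"
      using eq block_rep_in_transversal[OF B2 Y(1)] by blast
    then show False
      using block_rep_eqI[OF B1 Y(1) block_rep_in_block[OF B2 Y(1)]] rep1 by simp
  qed
  have "block_rep Y' B1 = block_rep Y' B2" if Y': "Y' \<in> P - {Y}" for Y'
  proof -
    have "block_rep Y' B1 \<noteq> v1"
      using Y Y' block_rep_in_block[OF B1] partition_on_block_eq[OF P] by blast
    then have "block_rep Y' B1 \<in> B2"
      using eq block_rep_in_transversal[OF B1] Y' by blast
    then show ?thesis
      using block_rep_eqI[OF B2 _ block_rep_in_block[OF B1]] Y' by simp
  qed
  then show "\<exists>Y\<in>P. r (block_rep Y B1) (block_rep Y B2) \<and> block_rep Y B1 \<noteq> block_rep Y B2 \<and>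
       (\<forall>Y'\<in>P - {Y}. block_rep Y' B1 = block_rep Y' B2)"
    using Y(1) rep1 rep2 r v1 v2 by (intro bexI[of _ Y]) auto
next
  assume "\<exists>Y\<in>P. r (block_rep Y B1) (block_rep Y B2) \<and> block_rep Y B1 \<noteq> block_rep Y B2 \<and>
       (\<forall>Y'\<in>P - {Y}. block_rep Y' B1 = block_rep Y' B2)"
  then obtain Y where Y: "Y \<in> P" and r: "r (block_rep Y B1) (block_rep Y B2)"
    and ne: "block_rep Y B1 \<noteq> block_rep Y B2"
    and same: "\<forall>Y'\<in>P - {Y}. block_rep Y' B1 = block_rep Y' B2"
    by blast
  have "(\<lambda>Y'. block_rep Y' B1) ` (P - {Y}) = (\<lambda>Y'. block_rep Y' B2) ` (P - {Y})"
    by (rule image_cong) (use same in auto)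
  then have "B1 - {block_rep Y B1} = B2 - {block_rep Y B2}"
    using transversal_Diff_block_rep[OF B1 Y] transversal_Diff_block_rep[OF B2 Y] by simp
  moreover have "block_rep Y B1 \<notin> B2" "block_rep Y B2 \<notin> B1"
    using ne block_rep_eqI[OF B2 Y block_rep_in_block[OF B1 Y]]
      block_rep_eqI[OF B1 Y block_rep_in_block[OF B2 Y]] by auto
  ultimately show "exchange r B1 B2"
    unfolding exchange_def using r block_rep_in_transversal[OF B1 Y] block_rep_in_transversal[OF B2 Y]
    by blast
qed

end

lemma transversals_subset_imp_refines:
  assumes P: "partition_on (verts G) P" and Q: "partition_on (verts G) Q"
    and transversals: "\<And>B. transversal G P B \<Longrightarrow> transversal G Q B"
  shows "refines (verts G) P Q"
  unfolding refines_def
proof (intro conjI ballI P Q)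
  fix p assume p: "p \<in> P"
  obtain a where a: "a \<in> p" using p partition_onD3[OF P] by (metis all_not_in_conv)
  then obtain q where q: "q \<in> Q" "a \<in> q"
    using p partition_on_obtain_block[OF Q] partition_onD1[OF P] by blast
  obtain B where B: "transversal G P B" "a \<in> B"
    using ex_transversal_through[OF P p a] by blast
  have "q \<inter> B = {a}"
    using transversal_Int_block[OF transversals[OF B(1)] q(1)]
      block_rep_eqI[OF transversals[OF B(1)] q(1) q(2) B(2)] by simp
  have "p \<subseteq> q"
  proof
    fix b assume b: "b \<in> p"
    have "transversal G Q (insert b (B - {a}))"
      using transversals transversal_exchange_in_block[OF P B(1) p a B(2) b] by blast
    then have "card (q \<inter> insert b (B - {a})) = 1"
      using q(1) unfolding transversal_def by blast
    show "b \<in> q"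
    proof (rule ccontr)
      assume "b \<notin> q"
      then have "q \<inter> insert b (B - {a}) = {}"
        using \<open>q \<inter> B = {a}\<close> by blast
      then show False
        using \<open>card (q \<inter> insert b (B - {a})) = 1\<close> by simp
    qed
  qed
  then show "\<exists>q\<in>Q. p \<subseteq> q" using q by blast
qed

section \<open>Graphs and exchange graphs\<close>

lemma graph_finite_verts: "graph G \<Longrightarrow> finite (verts G)"
  unfolding graph_def by simp

lemma adj_sym: "adj G u v \<longleftrightarrow> adj G v u"
  unfolding adj_def by (simp add: insert_commute)

lemma adj_irrefl:
  assumes "graph G"
  shows "\<not> adj G v v"
  using assms unfolding graph_def adj_def by (metis doubleton_eq_iff insert_absorb2)

lemma verts_complete: "verts (complete n) = {0..<n}"
  by (simp add: complete_def verts_def)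

lemma adj_complete: "adj (complete n) i j \<longleftrightarrow> i < n \<and> j < n \<and> i \<noteq> j"
  unfolding adj_def complete_def edges_def by (auto simp: doubleton_eq_iff)

lemma verts_induced: "verts (induced G Y) = Y"
  by (simp add: induced_def verts_def)

lemma adj_induced: "adj (induced G Y) u v \<longleftrightarrow> adj G u v \<and> u \<in> Y \<and> v \<in> Y"
  unfolding adj_def induced_def edges_def by auto

lemma verts_cart_prod: "verts (cart_prod I Gs) = PiE I (\<lambda>i. verts (Gs i))"
  by (simp add: cart_prod_def verts_def)

lemma adj_cart_prod:
  assumes "f \<in> PiE I (\<lambda>i. verts (Gs i))" "g \<in> PiE I (\<lambda>i. verts (Gs i))"
  shows "adj (cart_prod I Gs) f g \<longleftrightarrow>
    (\<exists>i\<in>I. adj (Gs i) (f i) (g i) \<and> (\<forall>j\<in>I - {i}. f j = g j))"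
proof
  assume "adj (cart_prod I Gs) f g"
  then obtain f' g' where fg: "{f, g} = {f', g'}"
    and i: "\<exists>i\<in>I. adj (Gs i) (f' i) (g' i) \<and> (\<forall>j\<in>I. j \<noteq> i \<longrightarrow> f' j = g' j)"
    unfolding adj_def cart_prod_def edges_def by auto
  from fg have "(f, g) = (f', g') \<or> (f, g) = (g', f')"
    by (auto simp: doubleton_eq_iff)
  then show "\<exists>i\<in>I. adj (Gs i) (f i) (g i) \<and> (\<forall>j\<in>I - {i}. f j = g j)"
    using i adj_sym by fastforce
next
  assume "\<exists>i\<in>I. adj (Gs i) (f i) (g i) \<and> (\<forall>j\<in>I - {i}. f j = g j)"
  then show "adj (cart_prod I Gs) f g"
    using assms unfolding adj_def cart_prod_def edges_def snd_conv by blast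
qed

lemma card_verts_if_iso_cart_prod:
  assumes "iso R (cart_prod I Gs)" "finite I"
  shows "card (verts R) = (\<Prod>i\<in>I. card (verts (Gs i)))"
proof -
  obtain h where "bij_betw h (verts R) (verts (cart_prod I Gs))"
    using assms(1) unfolding iso_def by blast
  then have "card (verts R) = card (PiE I (\<lambda>i. verts (Gs i)))"
    unfolding verts_cart_prod by (rule bij_betw_same_card)
  also have "\<dots> = (\<Prod>i\<in>I. card (verts (Gs i)))"
    by (rule card_PiE[OF assms(2)])
  finally show ?thesis .
qed

definition exchange_graph :: "'a set set \<Rightarrow> ('a \<Rightarrow> 'a \<Rightarrow> bool) \<Rightarrow> 'a set graph" where
  "exchange_graph S r = (S, {{B1, B2} | B1 B2. B1 \<in> S \<and> B2 \<in> S \<and> exchange r B1 B2})"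

lemma R_TE_eq_exchange_graph: "R_TE X x G = exchange_graph (reconf_verts X x G) (\<lambda>_ _. True)"
  unfolding R_TE_def exchange_graph_def exchange_def by simp

lemma R_TS_eq_exchange_graph: "R_TS X x G = exchange_graph (reconf_verts X x G) (adj G)"
  unfolding R_TS_def exchange_graph_def exchange_def by simp

lemma verts_exchange_graph: "verts (exchange_graph S r) = S"
  by (simp add: exchange_graph_def verts_def)

lemma exchange_sym:
  assumes "symp r" "exchange r B1 B2"
  shows "exchange r B2 B1"
  using assms unfolding exchange_def symp_def by metis

lemma adj_exchange_graph:
  assumes "symp r" "B1 \<in> S" "B2 \<in> S"
  shows "adj (exchange_graph S r) B1 B2 \<longleftrightarrow> exchange r B1 B2"
  using assms exchange_sym unfolding adj_def exchange_graph_def edges_def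
  by (auto simp: doubleton_eq_iff)

lemma iso_exchange_graph_cart_prod:
  assumes P: "partition_on (verts G) P" and "symp r"
    and E: "\<And>Y. Y \<in> P \<Longrightarrow> bij_betw (E Y) Y (verts (H Y))"
    and adj_H: "\<And>Y u v. Y \<in> P \<Longrightarrow> u \<in> Y \<Longrightarrow> v \<in> Y \<Longrightarrow>
      adj (H Y) (E Y u) (E Y v) \<longleftrightarrow> r u v \<and> u \<noteq> v"
  shows "iso (exchange_graph {B. transversal G P B} r) (cart_prod P H)"
proof -
  define \<phi> where "\<phi> B = restrict (\<lambda>Y. E Y (block_rep Y B)) P" for B
  have bij: "bij_betw \<phi> {B. transversal G P B} (PiE P (\<lambda>Y. verts (H Y)))"
    unfolding \<phi>_def by (rule bij_betw_transversals_PiE[OF P E])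
  have "adj (exchange_graph {B. transversal G P B} r) B1 B2 \<longleftrightarrow> adj (cart_prod P H) (\<phi> B1) (\<phi> B2)"
    if B1: "transversal G P B1" and B2: "transversal G P B2" for B1 B2
  proof -
    have rep: "block_rep Y B1 \<in> Y" "block_rep Y B2 \<in> Y" if "Y \<in> P" for Y
      using block_rep_in_block[OF B1 that] block_rep_in_block[OF B2 that] .
    have \<phi>_eq: "\<phi> B1 Y = \<phi> B2 Y \<longleftrightarrow> block_rep Y B1 = block_rep Y B2" if Y: "Y \<in> P" for Y
      using bij_betw_imp_inj_on[OF E[OF Y]] rep[OF Y] Y unfolding \<phi>_def by (auto dest: inj_onD)
    have "adj (exchange_graph {B. transversal G P B} r) B1 B2 \<longleftrightarrow> exchange r B1 B2"
      using adj_exchange_graph[OF \<open>symp r\<close>] B1 B2 by simp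
    also have "\<dots> \<longleftrightarrow> (\<exists>Y\<in>P. r (block_rep Y B1) (block_rep Y B2) \<and> block_rep Y B1 \<noteq> block_rep Y B2 \<and>
       (\<forall>Y'\<in>P - {Y}. block_rep Y' B1 = block_rep Y' B2))"
      by (rule exchange_transversals_iff[OF P B1 B2])
    also have "\<dots> \<longleftrightarrow> (\<exists>Y\<in>P. adj (H Y) (\<phi> B1 Y) (\<phi> B2 Y) \<and> (\<forall>Y'\<in>P - {Y}. \<phi> B1 Y' = \<phi> B2 Y'))"
      using adj_H rep \<phi>_eq unfolding \<phi>_def by (intro bex_cong) auto
    also have "\<dots> \<longleftrightarrow> adj (cart_prod P H) (\<phi> B1) (\<phi> B2)"
      using adj_cart_prod[of "\<phi> B1" P H "\<phi> B2"] bij_betwE[OF bij] B1 B2 by simp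
    finally show ?thesis .
  qed
  then show ?thesis
    using bij unfolding iso_def verts_exchange_graph verts_cart_prod by blast
qed

section \<open>Reconfiguration graphs of an optimal partition\<close>

context
  fixes G :: "'a graph" and X :: "'a graph \<Rightarrow> nat" and x :: "'a graph \<Rightarrow> 'a set set \<Rightarrow> bool"
    and Ys :: "'a set set"
  assumes G: "graph G" and Ys: "partition_on (verts G) Ys" and x_Ys: "x G Ys"
    and card_Ys: "card Ys = X G"
begin

lemma transversals_subset_reconf_verts: "{B. transversal G Ys B} \<subseteq> reconf_verts X x G"
proof
  fix B assume "B \<in> {B. transversal G Ys B}"
  then have B: "transversal G Ys B" by simp
  then have "card B = X G" using card_transversal[OF Ys B] card_Ys by simp
  then show "B \<in> reconf_verts X x G"
    unfolding reconf_verts_def using Ys x_Ys B by blast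
qed

lemma reconf_verts_eq_transversals_iff_unique:
  "reconf_verts X x G = {B. transversal G Ys B} \<longleftrightarrow>
    (\<forall>P. partition_on (verts G) P \<and> x G P \<and> card P = X G \<longrightarrow> P = Ys)"
proof
  assume eq: "reconf_verts X x G = {B. transversal G Ys B}"
  show "\<forall>P. partition_on (verts G) P \<and> x G P \<and> card P = X G \<longrightarrow> P = Ys"
  proof (intro allI impI, elim conjE)
    fix P assume P: "partition_on (verts G) P" and "x G P" "card P = X G"
    have "transversal G Ys B" if B: "transversal G P B" for B
    proof -
      have "card B = X G" using card_transversal[OF P B] \<open>card P = X G\<close> by simp
      then have "B \<in> reconf_verts X x G"
        unfolding reconf_verts_def using P \<open>x G P\<close> B by blast
      then show ?thesis using eq by simp
    qed
    then have "refines (verts G) P Ys"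
      by (rule transversals_subset_imp_refines[OF P Ys])
    then show "P = Ys"
      by (rule refines_card_eq_imp_eq)
        (use finite_elements[OF graph_finite_verts[OF G] P] \<open>card P = X G\<close> card_Ys in simp_all)
  qed
next
  assume unique: "\<forall>P. partition_on (verts G) P \<and> x G P \<and> card P = X G \<longrightarrow> P = Ys"
  have "B \<in> {B. transversal G Ys B}" if B_reconf: "B \<in> reconf_verts X x G" for B
  proof -
    obtain P where B: "card B = X G" and P: "partition_on (verts G) P" "x G P"
      and "transversal G P B"
      using B_reconf unfolding reconf_verts_def by blast
    moreover have "P = Ys"
      using unique P card_transversal[OF P(1) \<open>transversal G P B\<close>] B by simp
    ultimately show ?thesis by simp
  qed
  then show "reconf_verts X x G = {B. transversal G Ys B}"
    using transversals_subset_reconf_verts by blast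
qed

lemma reconf_verts_eq_transversals_if_iso:
  assumes iso: "iso R (cart_prod Ys H)" and verts_R: "verts R = reconf_verts X x G"
    and card_H: "\<And>Y. Y \<in> Ys \<Longrightarrow> card (verts (H Y)) = card Y"
  shows "reconf_verts X x G = {B. transversal G Ys B}"
proof -
  have fin_Ys: "finite Ys" by (rule finite_elements[OF graph_finite_verts[OF G] Ys])
  have "card (reconf_verts X x G) = (\<Prod>Y\<in>Ys. card Y)"
    using card_verts_if_iso_cart_prod[OF iso fin_Ys] card_H verts_R by simp
  also have "\<dots> = card (PiE Ys (\<lambda>Y. Y))"
    by (rule card_PiE[OF fin_Ys, symmetric])
  also have "\<dots> = card {B. transversal G Ys B}"
    using bij_betw_same_card[OF bij_betw_transversals_PiE[OF Ys, of "\<lambda>_. id" "\<lambda>Y. Y"]] by simp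
  finally have "card (reconf_verts X x G) = card {B. transversal G Ys B}" .
  moreover have "reconf_verts X x G \<subseteq> Pow (verts G)"
    unfolding reconf_verts_def transversal_def by blast
  then have "finite (reconf_verts X x G)"
    using graph_finite_verts[OF G] finite_subset by blast
  ultimately show ?thesis
    using card_subset_eq[OF _ transversals_subset_reconf_verts] by simp
qed

lemma iso_R_TE_complete_iff:
  "iso (R_TE X x G) (cart_prod Ys (\<lambda>Y. complete (card Y))) \<longleftrightarrow>
    reconf_verts X x G = {B. transversal G Ys B}"
proof
  assume "iso (R_TE X x G) (cart_prod Ys (\<lambda>Y. complete (card Y)))"
  then show "reconf_verts X x G = {B. transversal G Ys B}"
    by (rule reconf_verts_eq_transversals_if_iso)
      (simp_all add: R_TE_eq_exchange_graph verts_exchange_graph verts_complete)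
next
  assume eq: "reconf_verts X x G = {B. transversal G Ys B}"
  have "\<exists>e. bij_betw e Y {0..<card Y}" if "Y \<in> Ys" for Y
  proof (rule ex_bij_betw_finite_nat)
    show "finite Y"
      using graph_finite_verts[OF G] partition_onD1[OF Ys] that by (metis Union_upper finite_subset)
  qed
  then obtain E where E: "\<And>Y. Y \<in> Ys \<Longrightarrow> bij_betw (E Y) Y {0..<card Y}"
    by metis
  have adj_E: "adj (complete (card Y)) (E Y u) (E Y v) \<longleftrightarrow> True \<and> u \<noteq> v"
    if "Y \<in> Ys" "u \<in> Y" "v \<in> Y" for Y u v
    using bij_betwE[OF E[OF that(1)]] inj_onD[OF bij_betw_imp_inj_on[OF E[OF that(1)]]] that(2,3)
    by (auto simp: adj_complete)
  show "iso (R_TE X x G) (cart_prod Ys (\<lambda>Y. complete (card Y)))"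
    unfolding R_TE_eq_exchange_graph eq
    by (rule iso_exchange_graph_cart_prod[OF Ys _ _ adj_E])
      (simp_all add: symp_def verts_complete E)
qed

lemma iso_R_TS_induced_iff:
  "iso (R_TS X x G) (cart_prod Ys (\<lambda>Y. induced G Y)) \<longleftrightarrow>
    reconf_verts X x G = {B. transversal G Ys B}"
proof
  assume "iso (R_TS X x G) (cart_prod Ys (\<lambda>Y. induced G Y))"
  then show "reconf_verts X x G = {B. transversal G Ys B}"
    by (rule reconf_verts_eq_transversals_if_iso)
      (simp_all add: R_TS_eq_exchange_graph verts_exchange_graph verts_induced)
next
  assume eq: "reconf_verts X x G = {B. transversal G Ys B}"
  have adj_id: "adj (induced G Y) (id u) (id v) \<longleftrightarrow> adj G u v \<and> u \<noteq> v"
    if "u \<in> Y" "v \<in> Y" for Y u v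
    using that adj_irrefl[OF G, of u] by (auto simp: adj_induced)
  show "iso (R_TS X x G) (cart_prod Ys (\<lambda>Y. induced G Y))"
    unfolding R_TS_eq_exchange_graph eq
    by (rule iso_exchange_graph_cart_prod[OF Ys _ _ adj_id])
      (simp_all add: symp_def adj_sym verts_induced bij_betw_def)
qed

end

theorem theorem3p16:
  fixes G :: "'a graph"
    and X :: "'a graph \<Rightarrow> nat"
    and x :: "'a graph \<Rightarrow> 'a set set \<Rightarrow> bool"
    and Ys :: "'a set set"
  assumes "graph G"
    and "partition_param X x"
    and "partition_on (verts G) Ys"
    and "x G Ys"
    and "card Ys = X G"
  shows "(iso (R_TE X x G) (cart_prod Ys (\<lambda>Y. complete (card Y)))
            \<longleftrightarrow> iso (R_TS X x G) (cart_prod Ys (\<lambda>Y. induced G Y)))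
       \<and> (iso (R_TS X x G) (cart_prod Ys (\<lambda>Y. induced G Y))
            \<longleftrightarrow> (\<forall>P. partition_on (verts G) P \<and> x G P \<and> card P = X G \<longrightarrow> P = Ys))"
  using iso_R_TE_complete_iff[of G Ys x X, OF assms(1,3-5)]
    iso_R_TS_induced_iff[of G Ys x X, OF assms(1,3-5)]
    reconf_verts_eq_transversals_iff_unique[of G Ys x X, OF assms(1,3-5)]
  by simp

end
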